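(* Let $p>q>0$ be relatively prime integers with Hirzebruch–Jung continued fraction expansion \[ \frac{p}{q} = [a_1,\ldots,a_n] = a_1 - \cfrac{1}{a_2 - \cfrac{1}{\ddots - \cfrac{1}{a_n}}}, \qquad a_i\geq 2. \] Then $\prod_{i=1}^n (a_i-1) \leq p$. Moreover, the inequality still holds if one (but not both) of the factors $a_1-1$ and $a_n-1$ is replaced by $a_1$ or $a_n$ respectively.
   Context: The Hirzebruch–Jung expansion is computed recursively: $p_1/q_1=p/q$, $p_i/q_i = a_i - q_{i+1}/p_{i+1}$ with $p_{i+1}=q_i$ and $0<q_{i+1}<p_{i+1}$, terminating when $q_n=1$. *)

theory Defs
  imports Complex_Main
begin

text \<open>Value of the Hirzebruch--Jung continued fraction
  [a_1,...,a_n] = a_1 - 1/(a_2 - 1/(... - 1/a_n)).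
  The empty list is never used (value 0 as a dummy).\<close>
fun hjcf :: "int list \<Rightarrow> rat" where
  "hjcf [] = 0"
| "hjcf [a] = of_int a"
| "hjcf (a # b # as) = of_int a - 1 / hjcf (b # as)"

end

theory Submission
  imports Defs
begin

text \<open>Write the expansion as a fraction N/D via the recursion N' = a N - D, D' = N; then
  N - D \<ge> prod (a_i - 1) and D \<ge> 0 propagate along the list, and N \<ge> D gives the
  variants with a factor a_1 or a_n. The fraction is reduced (each step is unimodular),
  so N = p.\<close>

text \<open>(numerator, denominator); the empty expansion is \<infinity> = 1/0, so that [a] = a - 1/\<infinity>.\<close>
fun hjcf_frac :: "int list \<Rightarrow> int \<times> int" where
  "hjcf_frac [] = (1, 0)"
| "hjcf_frac (a # as) = (a * fst (hjcf_frac as) - snd (hjcf_frac as), fst (hjcf_frac as))"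

lemma prod_list_pred_ge_1:
  fixes as :: "int list"
  assumes "\<forall>a \<in> set as. 2 \<le> a"
  shows "1 \<le> prod_list (map (\<lambda>a. a - 1) as)"
  using assms
proof (induction as)
  case (Cons a as)
  then show ?case
    using mult_mono[of 1 "a - 1" 1 "prod_list (map (\<lambda>a. a - 1) as)"] by simp
qed simp

lemma hjcf_frac_den_nonneg_and_gap:
  assumes "\<forall>a \<in> set as. 2 \<le> a"
  shows "0 \<le> snd (hjcf_frac as)"
    and "prod_list (map (\<lambda>a. a - 1) as) \<le> fst (hjcf_frac as) - snd (hjcf_frac as)"
  using assms
proof (induction as)
  case (Cons a as)
  show "0 \<le> snd (hjcf_frac (a # as))"
    and "prod_list (map (\<lambda>a. a - 1) (a # as))
      \<le> fst (hjcf_frac (a # as)) - snd (hjcf_frac (a # as))"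
    if "\<forall>b \<in> set (a # as). 2 \<le> b"
  proof -
    define N D P where "N = fst (hjcf_frac as)" and "D = snd (hjcf_frac as)"
      and "P = prod_list (map (\<lambda>a. a - 1) as)"
    have a: "2 \<le> a" and as: "\<forall>a \<in> set as. 2 \<le> a" using that by auto
    have D: "0 \<le> D" and gap: "P \<le> N - D"
      using Cons.IH[OF as] by (simp_all add: N_def D_def P_def)
    have "1 \<le> P" using prod_list_pred_ge_1[OF as] by (simp add: P_def)
    then have "0 \<le> N" using D gap by linarith
    have "(a - 1) * P \<le> (a - 1) * (N - D)"
      using a gap by (intro mult_left_mono) auto
    moreover have "0 \<le> (a - 2) * D" using a D by simp
    ultimately have "(a - 1) * P \<le> (a * N - D) - N" by (simp add: algebra_simps)
    with \<open>0 \<le> N\<close> show "0 \<le> snd (hjcf_frac (a # as))"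
      and "prod_list (map (\<lambda>a. a - 1) (a # as))
        \<le> fst (hjcf_frac (a # as)) - snd (hjcf_frac (a # as))"
      by (simp_all add: N_def D_def P_def)
  qed
qed simp_all

lemma hd_mult_prod_le_hjcf_num:
  assumes "\<forall>a \<in> set as. 2 \<le> a" and "as \<noteq> []"
  shows "hd as * prod_list (map (\<lambda>a. a - 1) (tl as)) \<le> fst (hjcf_frac as)"
proof -
  obtain a r where as: "as = a # r" using \<open>as \<noteq> []\<close> by (cases as) auto
  define N D where "N = fst (hjcf_frac r)" and "D = snd (hjcf_frac r)"
  have a: "2 \<le> a" and r: "\<forall>a \<in> set r. 2 \<le> a" using assms(1) as by auto
  have "a * prod_list (map (\<lambda>a. a - 1) r) \<le> a * (N - D)"
    using a hjcf_frac_den_nonneg_and_gap(2)[OF r] by (simp add: N_def D_def)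
  also have "\<dots> \<le> a * N - D"
    using a mult_right_mono[of 1 a D] hjcf_frac_den_nonneg_and_gap(1)[OF r]
    by (simp add: D_def algebra_simps)
  finally show ?thesis by (simp add: as N_def D_def)
qed

lemma prod_mult_last_le_hjcf_num:
  assumes "\<forall>a \<in> set as. 2 \<le> a" and "as \<noteq> []"
  shows "prod_list (map (\<lambda>a. a - 1) (butlast as)) * last as \<le> fst (hjcf_frac as)"
  using assms
proof (induction as)
  case (Cons a r)
  show ?case
  proof (cases "r = []")
    case False
    define N D where "N = fst (hjcf_frac r)" and "D = snd (hjcf_frac r)"
    have a: "2 \<le> a" and r: "\<forall>a \<in> set r. 2 \<le> a" using Cons.prems by auto
    have "D \<le> N"
      using hjcf_frac_den_nonneg_and_gap[OF r] prod_list_pred_ge_1[OF r]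
      by (simp add: N_def D_def)
    have "(a - 1) * (prod_list (map (\<lambda>a. a - 1) (butlast r)) * last r) \<le> (a - 1) * N"
      using Cons.IH[OF r False] a by (simp add: N_def mult_left_mono)
    also have "\<dots> \<le> a * N - D" using \<open>D \<le> N\<close> by (simp add: algebra_simps)
    finally show ?thesis using False by (simp add: N_def D_def mult.assoc)
  qed simp
qed simp

lemma hjcf_eq_hjcf_frac:
  assumes "\<forall>a \<in> set as. 2 \<le> a" and "as \<noteq> []"
  shows "hjcf as = of_int (fst (hjcf_frac as)) / of_int (snd (hjcf_frac as))"
  using assms
proof (induction as rule: hjcf.induct)
  case (3 a b r)
  define N D where "N = fst (hjcf_frac (b # r))" and "D = snd (hjcf_frac (b # r))"
  have bs: "\<forall>a \<in> set (b # r). 2 \<le> a" using "3.prems" by simp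
  have "0 < N"
    using hjcf_frac_den_nonneg_and_gap[OF bs] prod_list_pred_ge_1[OF bs]
    by (simp add: N_def D_def)
  have "hjcf (a # b # r) = of_int a - 1 / (of_int N / of_int D)"
    using 3 by (simp add: N_def D_def)
  also have "\<dots> = (of_int a * of_int N - of_int D) / of_int N"
    using \<open>0 < N\<close> by (simp add: field_simps)
  finally show ?case by (simp add: N_def D_def)
qed simp_all

lemma coprime_hjcf_frac: "coprime (fst (hjcf_frac as)) (snd (hjcf_frac as))"
proof (induction as)
  case (Cons a as)
  have "gcd (fst (hjcf_frac as)) (a * fst (hjcf_frac as) + - snd (hjcf_frac as))
      = gcd (fst (hjcf_frac as)) (- snd (hjcf_frac as))"
    by (rule gcd_add_mult)
  with Cons show ?case
    by (simp add: coprime_iff_gcd_eq_1 gcd.commute algebra_simps)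
qed simp

lemma hjcf_frac_num_eq_reduced_num:
  fixes p q :: int
  assumes "0 < q" and "0 < p" and "coprime p q"
    and "\<forall>a \<in> set as. 2 \<le> a" and "as \<noteq> []"
    and "of_int p / of_int q = hjcf as"
  shows "fst (hjcf_frac as) = p"
proof -
  define N D where "N = fst (hjcf_frac as)" and "D = snd (hjcf_frac as)"
  have D: "0 \<le> D" and gap: "prod_list (map (\<lambda>a. a - 1) as) \<le> N - D"
    using hjcf_frac_den_nonneg_and_gap[OF assms(4)] by (simp_all add: N_def D_def)
  have eq: "(of_int p / of_int q :: rat) = of_int N / of_int D"
    using assms(6) hjcf_eq_hjcf_frac[OF assms(4,5)] by (simp add: N_def D_def)
  with assms(1,2) D have "0 < D" by (cases "D = 0") auto
  with eq assms(1) have "p * D = N * q"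
    by (simp add: field_simps flip: of_int_mult of_int_eq_iff)
  then have "\<bar>p\<bar> = \<bar>N\<bar>"
    using coprime_crossproduct_int[OF assms(3) coprime_hjcf_frac[of as, folded N_def D_def]]
    by (metis abs_mult)
  moreover have "0 \<le> N" using D gap prod_list_pred_ge_1[OF assms(4)] by linarith
  ultimately show ?thesis using assms(2) by (simp add: N_def)
qed

theorem mainTheorem7:
  fixes p q :: int and as :: "int list"
  assumes "0 < q" and "q < p" and "coprime p q"
    and "as \<noteq> []" and "\<forall>a \<in> set as. a \<ge> 2"
    and "of_int p / of_int q = hjcf as"
  shows "prod_list (map (\<lambda>a. a - 1) as) \<le> p
    \<and> hd as * prod_list (map (\<lambda>a. a - 1) (tl as)) \<le> p
    \<and> prod_list (map (\<lambda>a. a - 1) (butlast as)) * last as \<le> p"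
proof -
  have as: "\<forall>a \<in> set as. 2 \<le> a" using assms(5) by simp
  have "fst (hjcf_frac as) = p"
    using hjcf_frac_num_eq_reduced_num[OF assms(1) _ assms(3) as assms(4,6)] assms(1,2) by simp
  then show ?thesis
    using hjcf_frac_den_nonneg_and_gap[OF as] hd_mult_prod_le_hjcf_num[OF as assms(4)]
      prod_mult_last_le_hjcf_num[OF as assms(4)]
    by auto
qed

end
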